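(* Let $n\ge 1$, let $K\in\mathbb{R}^{n\times n}$ be symmetric positive semidefinite, let $\Sigma_1,\Sigma_2\in\mathbb{R}^{n\times n}$ be symmetric positive definite, and let $\lambda>1$. Let $K=PLP^T$ be an eigen-decomposition with $P$ orthogonal and $L=\mathrm{diag}(l_1,\dots,l_n)$, $l_1\ge\cdots\ge l_r>l_{r+1}=\cdots=l_n=0$, $r=\mathrm{rank}(K)$. Put $\tilde L=\mathrm{diag}(1/\sqrt{l_1},\dots,1/\sqrt{l_r},1,\dots,1)$, $\tilde K=\tilde L P^T$, $\tilde\Sigma_j=\tilde K\Sigma_j\tilde K^T$ ($j=1,2$), and write in block form (with $r\times r$ upper-left blocks) $$\tilde\Sigma_j=\begin{bmatrix}A_j&B_j\\ B_j^T&C_j\end{bmatrix},\qquad \hat\Sigma_j=A_j-B_jC_j^{-1}B_j^T,\quad j=1,2.$$ Then the optimization problem $$\max_{0\preceq K_U\preceq K}\ \log|K_U+\Sigma_1|-\lambda\log|K_U+\Sigma_2|$$ (over symmetric $n\times n$ matrices $K_U$) is equivalent to the problem $$\max_{0\preceq A_U\preceq I}\ \log|A_U+\hat\Sigma_1|-\lambda\log|A_U+\hat\Sigma_2|$$ (over symmetric $r\times r$ matrices $A_U$, $I$ the $r\times r$ identity), in the sense that $K_U$ is feasible for the first problem if and only if $\tilde K K_U\tilde K^T=\begin{bmatrix}A_U&0\\0&0\end{bmatrix}$ for some $A_U$ feasible for the second problem, and under this correspondence the two objective values differ by an additive constant independent of the variable.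
   Context: $|M|$ denotes the determinant of $M$; $M\preceq N$ means $N-M$ is positive semidefinite. The matrices $\hat\Sigma_1,\hat\Sigma_2$ are positive definite (Schur complements of positive definite matrices); when $r=n$ the blocks $B_j,C_j$ are empty and $\hat\Sigma_j=\tilde\Sigma_j$. *)

theory Defs
  imports "Jordan_Normal_Form.Matrix" "Jordan_Normal_Form.Determinant"
          "Jordan_Normal_Form.Gauss_Jordan_Elimination" Complex_Main
begin

definition psd_mat :: "real mat \<Rightarrow> bool" where
  "psd_mat M \<longleftrightarrow> dim_row M = dim_col M \<and> transpose_mat M = M \<and>
     (\<forall>x \<in> carrier_vec (dim_row M). 0 \<le> x \<bullet> (M *\<^sub>v x))"

definition pd_mat :: "real mat \<Rightarrow> bool" where
  "pd_mat M \<longleftrightarrow> dim_row M = dim_col M \<and> transpose_mat M = M \<and>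
     (\<forall>x \<in> carrier_vec (dim_row M). x \<noteq> 0\<^sub>v (dim_row M) \<longrightarrow> 0 < x \<bullet> (M *\<^sub>v x))"

definition loewner_le :: "real mat \<Rightarrow> real mat \<Rightarrow> bool" where
  "loewner_le M N \<longleftrightarrow> dim_row M = dim_row N \<and> dim_col M = dim_col N \<and> psd_mat (N - M)"

definition schur_top :: "nat \<Rightarrow> real mat \<Rightarrow> real mat" where
  "schur_top r M = (case split_block M r r of (A, B, _, C) \<Rightarrow>
      A - B * the (mat_inverse C) * transpose_mat B)"

end

(* The whitening matrix Kt = Lt P^T is invertible and maps K to diag(I_r, 0) by congruence.
   Congruence by an invertible matrix preserves positive semidefiniteness in both directions, so
   0 <= KU <= K iff 0 <= X <= diag(I_r, 0) for X = Kt KU Kt^T.  Such an X has zero diagonal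
   entries, hence zero rows and columns, outside the leading r x r block, so X = diag(AU, 0)
   with 0 <= AU <= I_r.
   For the objective, det (Kt (KU + Sigma) Kt^T) = det(Kt)^2 det (KU + Sigma), and by the Schur
   complement formula det (diag(AU, 0) + St) = det C * det (AU + Sh), where C is the positive
   definite lower right block of St.  Both det(Kt)^2 and det C are positive and independent of
   KU, so after taking logarithms they only contribute an additive constant. *)

theory Submission
  imports Defs
begin

lemma quadratic_form_congruence:
  fixes A M :: "real mat"
  assumes A: "A \<in> carrier_mat m n" and M: "M \<in> carrier_mat n n" and x: "x \<in> carrier_vec m"
  shows "x \<bullet> ((A * M * transpose_mat A) *\<^sub>v x) =
    (transpose_mat A *\<^sub>v x) \<bullet> (M *\<^sub>v (transpose_mat A *\<^sub>v x))"
proof -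
  have "(A * M * transpose_mat A) *\<^sub>v x = A *\<^sub>v (M *\<^sub>v (transpose_mat A *\<^sub>v x))"
    using A M x by (simp add: assoc_mult_mat_vec[of _ m n _ m] assoc_mult_mat_vec[of _ n n _ m])
  then show ?thesis
    using transpose_vec_mult_scalar[OF A, of "M *\<^sub>v (transpose_mat A *\<^sub>v x)" x] M A x by simp
qed

lemma transpose_congruence:
  fixes A M :: "real mat"
  assumes A: "A \<in> carrier_mat m n" and M: "M \<in> carrier_mat n n" and sym: "transpose_mat M = M"
  shows "transpose_mat (A * M * transpose_mat A) = A * M * transpose_mat A"
proof -
  have AM: "A * M \<in> carrier_mat m n" using A M by simp
  have "transpose_mat (A * M * transpose_mat A) = A * (transpose_mat M * transpose_mat A)"
    using transpose_mult[OF AM, of "transpose_mat A" m] transpose_mult[OF A M] A by simp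
  also have "\<dots> = A * M * transpose_mat A"
    using A M sym by (simp add: assoc_mult_mat[of _ m n _ n _ m])
  finally show ?thesis .
qed

lemma psd_mat_congruence:
  fixes A M :: "real mat"
  assumes A: "A \<in> carrier_mat m n" and M: "M \<in> carrier_mat n n" and psd: "psd_mat M"
  shows "psd_mat (A * M * transpose_mat A)"
  unfolding psd_mat_def
proof (intro conjI ballI)
  show "transpose_mat (A * M * transpose_mat A) = A * M * transpose_mat A"
    using transpose_congruence[OF A M] psd unfolding psd_mat_def by blast
  fix x :: "real vec" assume "x \<in> carrier_vec (dim_row (A * M * transpose_mat A))"
  then have x: "x \<in> carrier_vec m" using A by simp
  have "transpose_mat A *\<^sub>v x \<in> carrier_vec (dim_row M)" using A M x by simp
  then show "0 \<le> x \<bullet> ((A * M * transpose_mat A) *\<^sub>v x)"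
    using psd quadratic_form_congruence[OF A M x] unfolding psd_mat_def by simp
qed (use A in simp)

lemma pd_mat_congruence:
  fixes A M :: "real mat"
  assumes A: "A \<in> carrier_mat n n" and "det A \<noteq> 0" and M: "M \<in> carrier_mat n n" and pd: "pd_mat M"
  shows "pd_mat (A * M * transpose_mat A)"
  unfolding pd_mat_def
proof (intro conjI ballI impI)
  show "transpose_mat (A * M * transpose_mat A) = A * M * transpose_mat A"
    using transpose_congruence[OF A M] pd unfolding pd_mat_def by blast
  fix x :: "real vec" assume "x \<in> carrier_vec (dim_row (A * M * transpose_mat A))"
    and "x \<noteq> 0\<^sub>v (dim_row (A * M * transpose_mat A))"
  then have x: "x \<in> carrier_vec n" "x \<noteq> 0\<^sub>v n" using A by auto
  have "det (transpose_mat A) \<noteq> 0" using \<open>det A \<noteq> 0\<close> A by (simp add: det_transpose)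
  then have "transpose_mat A *\<^sub>v x \<noteq> 0\<^sub>v n"
    using det_0_iff_vec_prod_zero_field[of "transpose_mat A" n] A x by auto
  moreover have "transpose_mat A *\<^sub>v x \<in> carrier_vec (dim_row M)" using A M x by simp
  ultimately show "0 < x \<bullet> ((A * M * transpose_mat A) *\<^sub>v x)"
    using pd quadratic_form_congruence[OF A M x(1)] M unfolding pd_mat_def by simp
qed (use A in simp)

lemma congruence_cancel:
  fixes A B M :: "real mat"
  assumes A: "A \<in> carrier_mat n n" and B: "B \<in> carrier_mat n n" and M: "M \<in> carrier_mat n n"
    and BA: "B * A = 1\<^sub>m n"
  shows "B * (A * M * transpose_mat A) * transpose_mat B = M"
proof -
  have AB: "transpose_mat A * transpose_mat B = 1\<^sub>m n"
    using transpose_mult[OF B A] BA by simp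
  have "B * (A * M * transpose_mat A) * transpose_mat B =
      (B * A) * M * (transpose_mat A * transpose_mat B)"
    using A B M by (simp add: assoc_mult_mat[of _ n n _ n _ n])
  also have "\<dots> = M" unfolding BA AB using M by simp
  finally show ?thesis .
qed

lemma psd_mat_congruence_iff:
  fixes A B M :: "real mat"
  assumes A: "A \<in> carrier_mat n n" and B: "B \<in> carrier_mat n n" and M: "M \<in> carrier_mat n n"
    and BA: "B * A = 1\<^sub>m n"
  shows "psd_mat (A * M * transpose_mat A) \<longleftrightarrow> psd_mat M"
  using psd_mat_congruence[OF A M] psd_mat_congruence[OF B _, of "A * M * transpose_mat A"]
    congruence_cancel[OF A B M BA] A M by auto

lemma loewner_le_congruence_iff:
  fixes A B M N :: "real mat"
  assumes A: "A \<in> carrier_mat n n" and B: "B \<in> carrier_mat n n" and BA: "B * A = 1\<^sub>m n"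
    and M: "M \<in> carrier_mat n n" and N: "N \<in> carrier_mat n n"
  shows "loewner_le (A * M * transpose_mat A) (A * N * transpose_mat A) \<longleftrightarrow> loewner_le M N"
proof -
  have "loewner_le (A * M * transpose_mat A) (A * N * transpose_mat A) \<longleftrightarrow>
      psd_mat (A * N * transpose_mat A - A * M * transpose_mat A)"
    using A M N unfolding loewner_le_def by auto
  also have "A * N * transpose_mat A - A * M * transpose_mat A = A * (N - M) * transpose_mat A"
    using A M N by (simp add: mult_minus_distrib_mat[of _ n n] minus_mult_distrib_mat[of _ n n])
  also have "psd_mat \<dots> \<longleftrightarrow> psd_mat (N - M)"
    by (rule psd_mat_congruence_iff[OF A B minus_carrier_mat[OF M] BA])
  also have "\<dots> \<longleftrightarrow> loewner_le M N"
    using M N unfolding loewner_le_def by auto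
  finally show ?thesis .
qed

lemma psd_mat_diag_nonneg:
  fixes M :: "real mat"
  assumes M: "M \<in> carrier_mat n n" and psd: "psd_mat M" and i: "i < n"
  shows "0 \<le> M $$ (i, i)"
proof -
  have "0 \<le> unit_vec n i \<bullet> (M *\<^sub>v unit_vec n i)" using psd M unfolding psd_mat_def by auto
  then show ?thesis using M i by simp
qed

lemma quadratic_form_add_smult:
  fixes M :: "real mat"
  assumes M: "M \<in> carrier_mat n n" and u: "u \<in> carrier_vec n" and w: "w \<in> carrier_vec n"
  shows "(u + t \<cdot>\<^sub>v w) \<bullet> (M *\<^sub>v (u + t \<cdot>\<^sub>v w)) =
    u \<bullet> (M *\<^sub>v u) + t * (u \<bullet> (M *\<^sub>v w)) + t * (w \<bullet> (M *\<^sub>v u)) + t * t * (w \<bullet> (M *\<^sub>v w))"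
proof -
  have Mu: "M *\<^sub>v u \<in> carrier_vec n" and Mw: "M *\<^sub>v w \<in> carrier_vec n" using M u w by auto
  have "M *\<^sub>v (u + t \<cdot>\<^sub>v w) = M *\<^sub>v u + t \<cdot>\<^sub>v (M *\<^sub>v w)"
    using M u w by (simp add: mult_add_distrib_mat_vec mult_mat_vec)
  then show ?thesis
    using u w Mu Mw
    by (simp add: add_scalar_prod_distrib[of _ n] scalar_prod_add_distrib[of _ n] algebra_simps)
qed

lemma psd_mat_zero_diag_imp_zero_row:
  fixes M :: "real mat"
  assumes M: "M \<in> carrier_mat n n" and psd: "psd_mat M" and i: "i < n" and j: "j < n"
    and zero: "M $$ (i, i) = 0"
  shows "M $$ (i, j) = 0"
proof (rule ccontr)
  assume nz: "M $$ (i, j) \<noteq> 0"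
  have sym: "M $$ (j, i) = M $$ (i, j)"
    using psd M i j unfolding psd_mat_def by (metis index_transpose_mat(1) carrier_matD)
  \<comment> \<open>As \<open>M$$(i,i) = 0\<close>, the form at \<open>e\<^sub>j + t e\<^sub>i\<close> is affine in \<open>t\<close> with slope \<open>2 M$$(i,j) \<noteq> 0\<close>;
    this \<open>t\<close> makes it \<open>-1\<close>.\<close>
  define t where "t = - (M $$ (j, j) + 1) / (2 * M $$ (i, j))"
  have "0 \<le> (unit_vec n j + t \<cdot>\<^sub>v unit_vec n i) \<bullet> (M *\<^sub>v (unit_vec n j + t \<cdot>\<^sub>v unit_vec n i))"
    using psd M unfolding psd_mat_def by auto
  also have "\<dots> = M $$ (j, j) + t * M $$ (j, i) + t * M $$ (i, j) + t * t * M $$ (i, i)"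
    using M i j by (subst quadratic_form_add_smult[OF M]) auto
  also have "\<dots> = -1" using nz zero sym unfolding t_def by (simp add: field_simps)
  finally show False by simp
qed

abbreviation block_diag_zero :: "nat \<Rightarrow> nat \<Rightarrow> 'a :: zero mat \<Rightarrow> 'a mat" where
  "block_diag_zero r m A \<equiv> four_block_mat A (0\<^sub>m r m) (0\<^sub>m m r) (0\<^sub>m m m)"

lemma quadratic_form_block_diag_zero:
  fixes A :: "real mat"
  assumes A: "A \<in> carrier_mat r r" and x: "x \<in> carrier_vec r" and y: "y \<in> carrier_vec m"
  shows "(x @\<^sub>v y) \<bullet> (block_diag_zero r m A *\<^sub>v (x @\<^sub>v y)) = x \<bullet> (A *\<^sub>v x)"
proof -
  have "block_diag_zero r m A *\<^sub>v (x @\<^sub>v y) =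
      (A *\<^sub>v x + 0\<^sub>m r m *\<^sub>v y) @\<^sub>v (0\<^sub>m m r *\<^sub>v x + 0\<^sub>m m m *\<^sub>v y)"
    by (rule four_block_mat_mult_vec[OF A _ _ _ x y]) auto
  also have "\<dots> = (A *\<^sub>v x) @\<^sub>v 0\<^sub>v m" using A x y by auto
  finally show ?thesis using A x y by (simp add: scalar_prod_append[of _ r _ m])
qed

lemma psd_mat_block_diag_zero_iff:
  fixes A :: "real mat"
  assumes A: "A \<in> carrier_mat r r"
  shows "psd_mat (block_diag_zero r m A) \<longleftrightarrow> psd_mat A"
proof -
  have sym: "transpose_mat (block_diag_zero r m A) = block_diag_zero r m A \<longleftrightarrow> transpose_mat A = A"
  proof
    assume eq: "transpose_mat (block_diag_zero r m A) = block_diag_zero r m A"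
    show "transpose_mat A = A"
    proof (rule eq_matI)
      fix i j assume ij: "i < dim_row A" "j < dim_col A"
      have "transpose_mat (block_diag_zero r m A) $$ (i, j) = block_diag_zero r m A $$ (i, j)"
        by (simp only: eq)
      then show "transpose_mat A $$ (i, j) = A $$ (i, j)" using ij A by simp
    qed (use A in auto)
  next
    assume "transpose_mat A = A"
    then show "transpose_mat (block_diag_zero r m A) = block_diag_zero r m A"
      by (subst transpose_four_block_mat[OF A]) auto
  qed
  have form: "(\<forall>x \<in> carrier_vec (r + m). 0 \<le> x \<bullet> (block_diag_zero r m A *\<^sub>v x)) \<longleftrightarrow>
      (\<forall>x \<in> carrier_vec r. 0 \<le> x \<bullet> (A *\<^sub>v x))"
  proof safe
    fix x :: "real vec"
    assume nonneg: "\<forall>x \<in> carrier_vec (r + m). 0 \<le> x \<bullet> (block_diag_zero r m A *\<^sub>v x)"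
      and x: "x \<in> carrier_vec r"
    have "x @\<^sub>v 0\<^sub>v m \<in> carrier_vec (r + m)" using x by simp
    then have "0 \<le> (x @\<^sub>v 0\<^sub>v m) \<bullet> (block_diag_zero r m A *\<^sub>v (x @\<^sub>v 0\<^sub>v m))"
      using nonneg by blast
    then show "0 \<le> x \<bullet> (A *\<^sub>v x)"
      using quadratic_form_block_diag_zero[OF A x, of "0\<^sub>v m" m] by simp
  next
    fix x :: "real vec" assume "\<forall>x \<in> carrier_vec r. 0 \<le> x \<bullet> (A *\<^sub>v x)"
      and x: "x \<in> carrier_vec (r + m)"
    moreover have "x = vec_first x r @\<^sub>v vec_last x m" using x by simp
    ultimately show "0 \<le> x \<bullet> (block_diag_zero r m A *\<^sub>v x)"
      using quadratic_form_block_diag_zero[OF A, of "vec_first x r" "vec_last x m" m] by force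
  qed
  show ?thesis unfolding psd_mat_def using A sym form by auto
qed

lemma loewner_le_block_diag_zero_iff:
  fixes A Q :: "real mat"
  assumes A: "A \<in> carrier_mat r r" and Q: "Q \<in> carrier_mat r r"
  shows "loewner_le (block_diag_zero r m A) (block_diag_zero r m Q) \<longleftrightarrow> loewner_le A Q"
proof -
  have "block_diag_zero r m Q - block_diag_zero r m A = block_diag_zero r m (Q - A)"
    using A Q by (intro eq_matI) auto
  then show ?thesis
    using psd_mat_block_diag_zero_iff[OF minus_carrier_mat[OF A], of Q m] A Q
    unfolding loewner_le_def by auto
qed

lemma psd_loewner_le_block_diag_zero_iff:
  fixes X Q :: "real mat"
  assumes X: "X \<in> carrier_mat (r + m) (r + m)" and Q: "Q \<in> carrier_mat r r"
  shows "psd_mat X \<and> loewner_le X (block_diag_zero r m Q) \<longleftrightarrow>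
    (\<exists>A \<in> carrier_mat r r. psd_mat A \<and> loewner_le A Q \<and> X = block_diag_zero r m A)"
proof
  assume "psd_mat X \<and> loewner_le X (block_diag_zero r m Q)"
  then have psd: "psd_mat X" and psd_gap: "psd_mat (block_diag_zero r m Q - X)"
    unfolding loewner_le_def by auto
  have gap: "block_diag_zero r m Q - X \<in> carrier_mat (r + m) (r + m)" using minus_carrier_mat[OF X] .
  have diag: "X $$ (i, i) = 0" if i: "r \<le> i" "i < r + m" for i
  proof -
    have "0 \<le> (block_diag_zero r m Q - X) $$ (i, i)"
      by (rule psd_mat_diag_nonneg[OF gap psd_gap i(2)])
    then show ?thesis using psd_mat_diag_nonneg[OF X psd i(2)] i X Q by simp
  qed
  have zero: "X $$ (i, j) = 0" if ij: "i < r + m" "j < r + m" "r \<le> i \<or> r \<le> j" for i j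
  proof (cases "r \<le> i")
    case True
    then show ?thesis using psd_mat_zero_diag_imp_zero_row[OF X psd ij(1,2) diag] ij by simp
  next
    case False
    then have "X $$ (j, i) = 0" using psd_mat_zero_diag_imp_zero_row[OF X psd ij(2,1) diag] ij by simp
    moreover have "transpose_mat X = X" using psd unfolding psd_mat_def by simp
    ultimately show ?thesis using X ij by (metis carrier_matD index_transpose_mat(1))
  qed
  define A where "A = mat r r (\<lambda>(i, j). X $$ (i, j))"
  have A: "A \<in> carrier_mat r r" unfolding A_def by simp
  have XA: "X = block_diag_zero r m A"
    by (rule eq_matI) (use X zero in \<open>auto simp: A_def\<close>)
  show "\<exists>A \<in> carrier_mat r r. psd_mat A \<and> loewner_le A Q \<and> X = block_diag_zero r m A"
    using A XA psd \<open>psd_mat X \<and> loewner_le X (block_diag_zero r m Q)\<close>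
      psd_mat_block_diag_zero_iff[OF A] loewner_le_block_diag_zero_iff[OF A Q] by auto
qed (use Q psd_mat_block_diag_zero_iff loewner_le_block_diag_zero_iff in auto)

lemma pd_mat_add_psd:
  fixes M N :: "real mat"
  assumes M: "M \<in> carrier_mat n n" and N: "N \<in> carrier_mat n n" and "psd_mat M" and "pd_mat N"
  shows "pd_mat (M + N)"
proof -
  have "0 < x \<bullet> ((M + N) *\<^sub>v x)" if x: "x \<in> carrier_vec n" "x \<noteq> 0\<^sub>v n" for x
  proof -
    have "x \<bullet> ((M + N) *\<^sub>v x) = x \<bullet> (M *\<^sub>v x) + x \<bullet> (N *\<^sub>v x)"
      using M N x by (simp add: add_mult_distrib_mat_vec[of _ n n] scalar_prod_add_distrib[of _ n])
    moreover have "0 \<le> x \<bullet> (M *\<^sub>v x)" using \<open>psd_mat M\<close> M x unfolding psd_mat_def by auto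
    moreover have "0 < x \<bullet> (N *\<^sub>v x)" using \<open>pd_mat N\<close> N x unfolding pd_mat_def by auto
    ultimately show ?thesis by simp
  qed
  moreover have "transpose_mat (M + N) = M + N"
    using assms unfolding psd_mat_def pd_mat_def by (simp add: transpose_add)
  ultimately show ?thesis unfolding pd_mat_def using M N by auto
qed

lemma pd_mat_det_nonzero:
  fixes M :: "real mat"
  assumes M: "M \<in> carrier_mat n n" and pd: "pd_mat M"
  shows "det M \<noteq> 0"
proof
  assume "det M = 0"
  then obtain v where v: "v \<in> carrier_vec n" "v \<noteq> 0\<^sub>v n" "M *\<^sub>v v = 0\<^sub>v n"
    using det_0_iff_vec_prod_zero_field[OF M] by auto
  have "0 < v \<bullet> (M *\<^sub>v v)" using pd v M unfolding pd_mat_def by auto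
  then show False using v by simp
qed

lemma smult_mat_mult_vec:
  fixes A :: "'a :: comm_semiring_1 mat"
  assumes "v \<in> carrier_vec (dim_col A)"
  shows "(k \<cdot>\<^sub>m A) *\<^sub>v v = k \<cdot>\<^sub>v (A *\<^sub>v v)"
  using assms
  by (intro eq_vecI) (auto simp: scalar_prod_def sum_distrib_left ac_simps intro!: sum.cong)

lemma pd_mat_convex_comb_one:
  fixes M :: "real mat"
  assumes M: "M \<in> carrier_mat n n" and pd: "pd_mat M" and t: "0 \<le> t" "t \<le> 1"
  shows "pd_mat (t \<cdot>\<^sub>m M + (1 - t) \<cdot>\<^sub>m 1\<^sub>m n)"
proof -
  let ?N = "t \<cdot>\<^sub>m M + (1 - t) \<cdot>\<^sub>m 1\<^sub>m n"
  have "0 < x \<bullet> (?N *\<^sub>v x)" if x: "x \<in> carrier_vec n" "x \<noteq> 0\<^sub>v n" for x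
  proof -
    have "?N *\<^sub>v x = t \<cdot>\<^sub>v (M *\<^sub>v x) + (1 - t) \<cdot>\<^sub>v x"
      using M x by (simp add: add_mult_distrib_mat_vec[of _ n n] smult_mat_mult_vec)
    then have "x \<bullet> (?N *\<^sub>v x) = t * (x \<bullet> (M *\<^sub>v x)) + (1 - t) * (x \<bullet> x)"
      using M x by (simp add: scalar_prod_add_distrib[of _ n])
    moreover have "0 < x \<bullet> (M *\<^sub>v x)" using pd x M unfolding pd_mat_def by auto
    moreover have "0 < x \<bullet> x" using conjugate_square_greater_0_vec[OF x(1)] x(2) by simp
    ultimately show ?thesis using t by (smt (verit) mult_nonneg_nonneg mult_pos_pos)
  qed
  moreover have "transpose_mat ?N = ?N"
  proof -
    have "transpose_mat M = M" using pd unfolding pd_mat_def by simp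
    then have "M $$ (j, i) = M $$ (i, j)" if "i < n" "j < n" for i j
      using M that by (metis carrier_matD index_transpose_mat(1))
    then show ?thesis using M by (intro eq_matI) auto
  qed
  ultimately show ?thesis unfolding pd_mat_def using M by auto
qed

lemma continuous_on_det_convex_comb_one:
  fixes M :: "real mat"
  assumes M: "M \<in> carrier_mat n n"
  shows "continuous_on S (\<lambda>t. det (t \<cdot>\<^sub>m M + (1 - t) \<cdot>\<^sub>m 1\<^sub>m n))"
proof -
  have "det (t \<cdot>\<^sub>m M + (1 - t) \<cdot>\<^sub>m 1\<^sub>m n) = (\<Sum>p \<in> {p. p permutes {0..<n}}. signof p *
      (\<Prod>i = 0..<n. t * M $$ (i, p i) + (1 - t) * (if i = p i then 1 else 0)))" for t
    unfolding det_def using M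
    by (auto intro!: sum.cong prod.cong simp: permutes_in_image)
  then show ?thesis by (simp only:) (intro continuous_intros)
qed

lemma pd_mat_det_pos:
  fixes M :: "real mat"
  assumes M: "M \<in> carrier_mat n n" and pd: "pd_mat M"
  shows "det M > 0"
proof (rule ccontr)
  \<comment> \<open>Along the segment from \<open>1\<^sub>m n\<close> to \<open>M\<close> all matrices are positive definite,
    so by the intermediate value theorem the determinant cannot change sign.\<close>
  define f where "f t = det (t \<cdot>\<^sub>m M + (1 - t) \<cdot>\<^sub>m 1\<^sub>m n)" for t
  assume "\<not> det M > 0"
  moreover have "0 \<cdot>\<^sub>m M + (1 - 0) \<cdot>\<^sub>m 1\<^sub>m n = 1\<^sub>m n" "1 \<cdot>\<^sub>m M + (1 - 1) \<cdot>\<^sub>m 1\<^sub>m n = M"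
    using M by (auto intro!: eq_matI)
  then have "f 0 = 1" "f 1 = det M" unfolding f_def by simp_all
  ultimately obtain t where t: "0 \<le> t" "t \<le> 1" "f t = 0"
    using IVT2'[of f 1 0 0] continuous_on_det_convex_comb_one[OF M] unfolding f_def by force
  moreover have "f t \<noteq> 0"
    unfolding f_def
    by (rule pd_mat_det_nonzero[of _ n, OF _ pd_mat_convex_comb_one[OF M pd t(1,2)]]) (use M in simp)
  ultimately show False by simp
qed

lemma pd_mat_lower_right_block:
  fixes A B C D :: "real mat"
  assumes A: "A \<in> carrier_mat r r" and B: "B \<in> carrier_mat r m" and C: "C \<in> carrier_mat m r"
    and D: "D \<in> carrier_mat m m" and pd: "pd_mat (four_block_mat A B C D)"
  shows "pd_mat D"
proof -
  let ?M = "four_block_mat A B C D"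
  have sym: "transpose_mat D = D"
  proof (rule eq_matI)
    fix i j assume ij: "i < dim_row D" "j < dim_col D"
    have "transpose_mat ?M = ?M" using pd unfolding pd_mat_def by blast
    then have "transpose_mat ?M $$ (i + r, j + r) = ?M $$ (i + r, j + r)" by simp
    then show "transpose_mat D $$ (i, j) = D $$ (i, j)" using ij A B C D by simp
  qed (use D in auto)
  have "0 < y \<bullet> (D *\<^sub>v y)" if y: "y \<in> carrier_vec m" "y \<noteq> 0\<^sub>v m" for y
  proof -
    have "(0\<^sub>v (r + m) :: real vec) = 0\<^sub>v r @\<^sub>v 0\<^sub>v m" by (intro eq_vecI) auto
    then have "0\<^sub>v r @\<^sub>v y \<in> carrier_vec (dim_row ?M)" "0\<^sub>v r @\<^sub>v y \<noteq> 0\<^sub>v (dim_row ?M)"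
      using y A D append_vec_eq[of "0\<^sub>v r" r "0\<^sub>v r" y "0\<^sub>v m"] by auto
    then have "0 < (0\<^sub>v r @\<^sub>v y) \<bullet> (?M *\<^sub>v (0\<^sub>v r @\<^sub>v y))"
      using pd unfolding pd_mat_def by blast
    also have "?M *\<^sub>v (0\<^sub>v r @\<^sub>v y) = (A *\<^sub>v 0\<^sub>v r + B *\<^sub>v y) @\<^sub>v (C *\<^sub>v 0\<^sub>v r + D *\<^sub>v y)"
      by (rule four_block_mat_mult_vec[OF A B C D]) (use y in auto)
    also have "C *\<^sub>v 0\<^sub>v r = 0\<^sub>v m" using C by (intro eq_vecI) auto
    also have "(0\<^sub>v r @\<^sub>v y) \<bullet> ((A *\<^sub>v 0\<^sub>v r + B *\<^sub>v y) @\<^sub>v (0\<^sub>v m + D *\<^sub>v y)) = y \<bullet> (D *\<^sub>v y)"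
      using y A B C D by (simp add: scalar_prod_append[of _ r _ m])
    finally show ?thesis .
  qed
  then show ?thesis unfolding pd_mat_def using D sym by auto
qed

lemma det_four_block_mat_schur:
  fixes A B B' C C' :: "real mat"
  assumes A: "A \<in> carrier_mat r r" and B: "B \<in> carrier_mat r m" and B': "B' \<in> carrier_mat m r"
    and C: "C \<in> carrier_mat m m" and C': "C' \<in> carrier_mat m m" and inv: "C' * C = 1\<^sub>m m"
  shows "det (four_block_mat A B B' C) = det C * det (A - B * C' * B')"
proof -
  define S where "S = A - B * C' * B'"
  have BC': "B * C' \<in> carrier_mat r m" using B C' by auto
  have S: "S \<in> carrier_mat r r" using A B C' B' unfolding S_def by auto
  have "B * C' * C = B" using B C C' inv by (simp add: assoc_mult_mat[of _ r m _ m _ m])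
  moreover have "1\<^sub>m r * S + B * C' * B' = A"
    using S A B C' B' unfolding S_def by (intro eq_matI) auto
  ultimately have "four_block_mat A B B' C =
      four_block_mat (1\<^sub>m r) (B * C') (0\<^sub>m m r) (1\<^sub>m m) * four_block_mat S (0\<^sub>m r m) B' C"
    using B B' C S by (simp add: mult_four_block_mat[OF one_carrier_mat BC' zero_carrier_mat one_carrier_mat S zero_carrier_mat B' C])
  then have "det (four_block_mat A B B' C) =
      det (four_block_mat (1\<^sub>m r) (B * C') (0\<^sub>m m r) (1\<^sub>m m)) * det (four_block_mat S (0\<^sub>m r m) B' C)"
    by (simp add: det_mult[of _ "r + m"] BC' S B' C)
  also have "det (four_block_mat (1\<^sub>m r) (B * C') (0\<^sub>m m r) (1\<^sub>m m)) = 1"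
    by (subst det_four_block_mat_lower_left_zero[OF _ BC']) auto
  also have "det (four_block_mat S (0\<^sub>m r m) B' C) = det S * det C"
    by (rule det_four_block_mat_upper_right_zero[OF S _ B' C]) simp
  finally show ?thesis unfolding S_def by simp
qed

lemma det_block_diag_zero_add_pd:
  fixes S :: "real mat"
  assumes S: "S \<in> carrier_mat (r + m) (r + m)" and pd: "pd_mat S"
  obtains d where "d > 0"
    and "\<And>A. A \<in> carrier_mat r r \<Longrightarrow> det (block_diag_zero r m A + S) = d * det (A + schur_top r S)"
proof -
  obtain S1 S2 S3 S4 where split: "split_block S r r = (S1, S2, S3, S4)" by (metis prod_cases4)
  have dims: "dim_row S = r + m" "dim_col S = r + m" using S by auto
  note blocks = split_block[OF split dims]
  have S4_pd: "pd_mat S4" using pd_mat_lower_right_block[OF blocks(1-4)] blocks(5) pd by simp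
  then have det_S4: "det S4 > 0" by (rule pd_mat_det_pos[OF blocks(4)])
  then have "S4 \<in> Units (ring_mat TYPE(real) m ())"
    by (intro det_non_zero_imp_unit[OF blocks(4)]) simp
  then obtain S4' where S4': "mat_inverse S4 = Some S4'"
    using mat_inverse(1)[OF blocks(4), where b = "()"] by fastforce
  note inverse = mat_inverse(2)[OF blocks(4) S4']
  have S3: "S3 = transpose_mat S2"
  proof (rule eq_matI)
    fix i j assume ij: "i < dim_row (transpose_mat S2)" "j < dim_col (transpose_mat S2)"
    have "transpose_mat S = S" using pd unfolding pd_mat_def by simp
    then have "transpose_mat S $$ (i + r, j) = S $$ (i + r, j)" by simp
    then show "S3 $$ (i, j) = transpose_mat S2 $$ (i, j)"
      using ij blocks dims by simp
  qed (use blocks in auto)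
  have schur: "schur_top r S = S1 - S2 * S4' * S3"
    unfolding schur_top_def split S3 using S4' by simp
  show ?thesis
  proof (rule that[OF det_S4])
    fix A :: "real mat" assume A: "A \<in> carrier_mat r r"
    have "block_diag_zero r m A + S = four_block_mat (A + S1) S2 S3 S4"
      unfolding blocks(5) using A blocks(1-4) by (subst add_four_block_mat[of _ r r _ m _ m]) auto
    then have "det (block_diag_zero r m A + S) = det S4 * det (A + S1 - S2 * S4' * S3)"
      using det_four_block_mat_schur[of _ r S2 m S3 S4 S4'] A blocks inverse by simp
    also have "A + S1 - S2 * S4' * S3 = A + schur_top r S"
      unfolding schur using A blocks inverse by (intro eq_matI) auto
    finally show "det (block_diag_zero r m A + S) = det S4 * det (A + schur_top r S)" .
  qed
qed

lemma ln_det_add_reduction: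
  fixes T Sigma :: "real mat"
  assumes T: "T \<in> carrier_mat (r + m) (r + m)" "det T \<noteq> 0"
    and Sigma: "Sigma \<in> carrier_mat (r + m) (r + m)" "pd_mat Sigma"
  obtains c where "\<And>M A. M \<in> carrier_mat (r + m) (r + m) \<Longrightarrow> psd_mat M \<Longrightarrow> A \<in> carrier_mat r r \<Longrightarrow>
      T * M * transpose_mat T = block_diag_zero r m A \<Longrightarrow>
      ln (det (M + Sigma)) = ln (det (A + schur_top r (T * Sigma * transpose_mat T))) + c"
proof -
  let ?S = "T * Sigma * transpose_mat T"
  have S: "?S \<in> carrier_mat (r + m) (r + m)" using T Sigma by simp
  obtain d where d: "d > 0"
    and det_S: "\<And>A. A \<in> carrier_mat r r \<Longrightarrow> det (block_diag_zero r m A + ?S) = d * det (A + schur_top r ?S)"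
    using det_block_diag_zero_add_pd[OF S pd_mat_congruence[OF T Sigma]] by metis
  show ?thesis
  proof (rule that[of "ln d - ln (det T * det T)"])
    fix M A assume M: "M \<in> carrier_mat (r + m) (r + m)" and "psd_mat M" and A: "A \<in> carrier_mat r r"
      and MA: "T * M * transpose_mat T = block_diag_zero r m A"
    have "det (M + Sigma) > 0"
      by (rule pd_mat_det_pos[of _ "r + m", OF _ pd_mat_add_psd[OF M Sigma(1) \<open>psd_mat M\<close> Sigma(2)]])
        (use M Sigma in simp)
    have "T * (M + Sigma) * transpose_mat T = T * M * transpose_mat T + ?S"
      using T M Sigma by (simp add: mult_add_distrib_mat[of _ "r + m" "r + m"]
          add_mult_distrib_mat[of _ "r + m" "r + m"])
    then have "det (T * (M + Sigma) * transpose_mat T) = d * det (A + schur_top r ?S)"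
      unfolding MA using det_S[OF A] by simp
    then have "det T * det T * det (M + Sigma) = d * det (A + schur_top r ?S)"
      using T M Sigma by (simp add: det_mult[of _ "r + m"] det_transpose ac_simps)
    moreover have "det T * det T > 0" using T(2) not_real_square_gt_zero by blast
    ultimately show "ln (det (M + Sigma)) = ln (det (A + schur_top r ?S)) + (ln d - ln (det T * det T))"
      using \<open>det (M + Sigma) > 0\<close> d
      by (smt (verit, best) ln_mult mult_pos_pos zero_less_mult_iff)
  qed
qed

lemma scaled_orthogonal_inverse:
  fixes P :: "'a :: comm_ring_1 mat"
  assumes P: "P \<in> carrier_mat n n" and "transpose_mat P * P = 1\<^sub>m n" and "P * transpose_mat P = 1\<^sub>m n"
    and de: "\<And>i. i < n \<Longrightarrow> d i * e i = 1"
  shows "(mat_diag n d * transpose_mat P) * (P * mat_diag n e) = 1\<^sub>m n"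
    and "(P * mat_diag n e) * (mat_diag n d * transpose_mat P) = 1\<^sub>m n"
proof -
  have "mat_diag n (\<lambda>i. d i * e i) = 1\<^sub>m n" "mat_diag n (\<lambda>i. e i * d i) = 1\<^sub>m n"
    using de by (auto intro!: eq_matI simp: mat_diag_def mult.commute)
  then have DE: "mat_diag n d * mat_diag n e = 1\<^sub>m n" and ED: "mat_diag n e * mat_diag n d = 1\<^sub>m n"
    by simp_all
  have "(mat_diag n d * transpose_mat P) * (P * mat_diag n e) =
      mat_diag n d * (transpose_mat P * P) * mat_diag n e"
    using P by (simp add: assoc_mult_mat[of _ n n _ n _ n] mult_carrier_mat[of _ n n _ n])
  then show "(mat_diag n d * transpose_mat P) * (P * mat_diag n e) = 1\<^sub>m n"
    using assms(2) DE by (simp add: right_mult_one_mat[OF mat_diag_dim])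
  have "(P * mat_diag n e) * (mat_diag n d * transpose_mat P) =
      P * (mat_diag n e * mat_diag n d) * transpose_mat P"
    using P by (simp add: assoc_mult_mat[of _ n n _ n _ n] mult_carrier_mat[of _ n n _ n]
        del: mat_diag_diag)
  then show "(P * mat_diag n e) * (mat_diag n d * transpose_mat P) = 1\<^sub>m n"
    using assms(3) ED P by simp
qed

lemma congruence_orthogonal_diag:
  fixes P :: "'a :: comm_ring_1 mat"
  assumes P: "P \<in> carrier_mat n n" and PP: "transpose_mat P * P = 1\<^sub>m n"
  shows "(mat_diag n d * transpose_mat P) * (P * mat_diag n l * transpose_mat P) *
      transpose_mat (mat_diag n d * transpose_mat P) = mat_diag n (\<lambda>i. d i * l i * d i)"
proof -
  have "transpose_mat (mat_diag n d) = mat_diag n d" by (intro eq_matI) (auto simp: mat_diag_def)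
  then have "transpose_mat (mat_diag n d * transpose_mat P) = P * mat_diag n d"
    using P by (simp add: transpose_mult[of _ n n _ n])
  moreover have "transpose_mat P * (P * X) = X" if "X \<in> carrier_mat n n" for X
    using P PP that by (simp add: assoc_mult_mat[of _ n n _ n _ n, symmetric])
  ultimately show ?thesis
    using P by (simp add: assoc_mult_mat[of _ n n _ n _ n] mult_carrier_mat[of _ n n _ n] mult.assoc)
qed

lemma mat_diag_eq_block_diag_zero_one:
  assumes "\<And>i. i < r \<Longrightarrow> f i = 1" and "\<And>i. r \<le> i \<Longrightarrow> i < r + m \<Longrightarrow> f i = 0"
  shows "mat_diag (r + m) f = block_diag_zero r m (1\<^sub>m r)"
  using assms by (intro eq_matI) (auto simp: mat_diag_def)

lemma whitening_transform:
  fixes P W :: "real mat" and l :: "nat \<Rightarrow> real"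
  assumes P: "P \<in> carrier_mat n n" "transpose_mat P * P = 1\<^sub>m n" "P * transpose_mat P = 1\<^sub>m n"
    and "r \<le> n" and pos: "\<And>i. i < r \<Longrightarrow> l i > 0" and zero: "\<And>i. r \<le> i \<Longrightarrow> i < n \<Longrightarrow> l i = 0"
    and W: "W = mat_diag n (\<lambda>i. if i < r then 1 / sqrt (l i) else 1) * transpose_mat P"
  shows "W \<in> carrier_mat n n"
    and "\<exists>V \<in> carrier_mat n n. V * W = 1\<^sub>m n \<and> W * V = 1\<^sub>m n"
    and "W * (P * mat_diag n l * transpose_mat P) * transpose_mat W = block_diag_zero r (n - r) (1\<^sub>m r)"
proof -
  define d where "d i = (if i < r then 1 / sqrt (l i) else 1)" for i
  define e where "e i = (if i < r then sqrt (l i) else 1)" for i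
  have W_def: "W = mat_diag n d * transpose_mat P" unfolding W d_def ..
  show "W \<in> carrier_mat n n" unfolding W_def using P by (simp add: mult_carrier_mat[of _ n n])
  have "d i * e i = 1" for i
    using pos[of i] unfolding d_def e_def by (cases "i < r") auto
  from scaled_orthogonal_inverse[OF P, of d e, OF this, folded W_def]
  show "\<exists>V \<in> carrier_mat n n. V * W = 1\<^sub>m n \<and> W * V = 1\<^sub>m n"
    using P by (intro bexI[of _ "P * mat_diag n e"]) auto
  have n: "n = r + (n - r)" using \<open>r \<le> n\<close> by simp
  have "W * (P * mat_diag n l * transpose_mat P) * transpose_mat W = mat_diag n (\<lambda>i. d i * l i * d i)"
    unfolding W_def by (rule congruence_orthogonal_diag[OF P(1,2)])
  also have "\<dots> = block_diag_zero r (n - r) (1\<^sub>m r)"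
  proof (subst n, rule mat_diag_eq_block_diag_zero_one)
    fix i assume "i < r"
    then have "l i > 0" by (rule pos)
    then show "d i * l i * d i = 1" unfolding d_def using \<open>i < r\<close> by (simp add: field_simps)
  next
    fix i assume "r \<le> i" "i < r + (n - r)"
    then show "d i * l i * d i = 0" using zero n by simp
  qed
  finally show "W * (P * mat_diag n l * transpose_mat P) * transpose_mat W =
      block_diag_zero r (n - r) (1\<^sub>m r)" .
qed

lemma psd_loewner_le_congruence_block_iff:
  fixes W V K Q M :: "real mat"
  assumes W: "W \<in> carrier_mat (r + m) (r + m)" and V: "V \<in> carrier_mat (r + m) (r + m)"
    and VW: "V * W = 1\<^sub>m (r + m)" and K: "K \<in> carrier_mat (r + m) (r + m)" and Q: "Q \<in> carrier_mat r r"
    and WK: "W * K * transpose_mat W = block_diag_zero r m Q" and M: "M \<in> carrier_mat (r + m) (r + m)"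
  shows "psd_mat M \<and> loewner_le M K \<longleftrightarrow>
    (\<exists>A \<in> carrier_mat r r. psd_mat A \<and> loewner_le A Q \<and> W * M * transpose_mat W = block_diag_zero r m A)"
  using psd_mat_congruence_iff[OF W V M VW] loewner_le_congruence_iff[OF W V VW M K]
    psd_loewner_le_block_diag_zero_iff[of "W * M * transpose_mat W" r m Q] W M Q WK
  by simp

theorem proposition1:
  fixes n r :: nat and K Sigma1 Sigma2 P Lt Kt St1 St2 Sh1 Sh2 :: "real mat"
    and l :: "nat \<Rightarrow> real" and lam :: real
  assumes "n \<ge> 1"
    and "K \<in> carrier_mat n n" and "psd_mat K"
    and "Sigma1 \<in> carrier_mat n n" and "pd_mat Sigma1"
    and "Sigma2 \<in> carrier_mat n n" and "pd_mat Sigma2"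
    and "lam > 1"
    and "P \<in> carrier_mat n n" and "transpose_mat P * P = 1\<^sub>m n" and "P * transpose_mat P = 1\<^sub>m n"
    and "K = P * mat_diag n l * transpose_mat P"
    and "r \<le> n"
    and "\<And>i. i + 1 < r \<Longrightarrow> l (i + 1) \<le> l i"
    and "\<And>i. i < r \<Longrightarrow> l i > 0"
    and "\<And>i. r \<le> i \<Longrightarrow> i < n \<Longrightarrow> l i = 0"
    and "Lt = mat_diag n (\<lambda>i. if i < r then 1 / sqrt (l i) else 1)"
    and "Kt = Lt * transpose_mat P"
    and "St1 = Kt * Sigma1 * transpose_mat Kt"
    and "St2 = Kt * Sigma2 * transpose_mat Kt"
    and "Sh1 = schur_top r St1"
    and "Sh2 = schur_top r St2"
  shows
    "(\<forall>KU \<in> carrier_mat n n.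
        (psd_mat KU \<and> loewner_le KU K) \<longleftrightarrow>
        (\<exists>AU \<in> carrier_mat r r. psd_mat AU \<and> loewner_le AU (1\<^sub>m r) \<and>
           Kt * KU * transpose_mat Kt =
             four_block_mat AU (0\<^sub>m r (n - r)) (0\<^sub>m (n - r) r) (0\<^sub>m (n - r) (n - r))))
     \<and> (\<exists>c :: real. \<forall>KU \<in> carrier_mat n n. \<forall>AU \<in> carrier_mat r r.
        psd_mat KU \<and> loewner_le KU K \<and> psd_mat AU \<and> loewner_le AU (1\<^sub>m r) \<and>
        Kt * KU * transpose_mat Kt =
          four_block_mat AU (0\<^sub>m r (n - r)) (0\<^sub>m (n - r) r) (0\<^sub>m (n - r) (n - r))
        \<longrightarrow> ln (det (KU + Sigma1)) - lam * ln (det (KU + Sigma2))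
            = ln (det (AU + Sh1)) - lam * ln (det (AU + Sh2)) + c)"
proof -
  define m where "m = n - r"
  have n: "n = r + m" using \<open>r \<le> n\<close> unfolding m_def by simp
  have "Kt = mat_diag n (\<lambda>i. if i < r then 1 / sqrt (l i) else 1) * transpose_mat P"
    using assms(17,18) by simp
  note whitening = whitening_transform[OF assms(9-11,13,15,16) this, folded assms(12) m_def]
  obtain Ki where Ki: "Ki \<in> carrier_mat n n" "Ki * Kt = 1\<^sub>m n" "Kt * Ki = 1\<^sub>m n"
    using whitening(2) by blast
  have "det Kt \<noteq> 0" using det_mult[OF whitening(1) Ki(1)] Ki(3) by auto
  have feasible: "\<forall>KU \<in> carrier_mat n n. (psd_mat KU \<and> loewner_le KU K) \<longleftrightarrow>
      (\<exists>AU \<in> carrier_mat r r. psd_mat AU \<and> loewner_le AU (1\<^sub>m r) \<and>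
        Kt * KU * transpose_mat Kt = block_diag_zero r m AU)"
    using psd_loewner_le_congruence_block_iff[of Kt r m Ki K "1\<^sub>m r"] whitening Ki assms(2) n
    by simp
  obtain c1 where "\<And>M A. M \<in> carrier_mat n n \<Longrightarrow> psd_mat M \<Longrightarrow> A \<in> carrier_mat r r \<Longrightarrow>
      Kt * M * transpose_mat Kt = block_diag_zero r m A \<Longrightarrow>
      ln (det (M + Sigma1)) = ln (det (A + Sh1)) + c1"
    using ln_det_add_reduction[of Kt r m Sigma1] whitening(1) \<open>det Kt \<noteq> 0\<close> assms(4,5,19,21) n
    by metis
  moreover obtain c2 where "\<And>M A. M \<in> carrier_mat n n \<Longrightarrow> psd_mat M \<Longrightarrow> A \<in> carrier_mat r r \<Longrightarrow>
      Kt * M * transpose_mat Kt = block_diag_zero r m A \<Longrightarrow>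
      ln (det (M + Sigma2)) = ln (det (A + Sh2)) + c2"
    using ln_det_add_reduction[of Kt r m Sigma2] whitening(1) \<open>det Kt \<noteq> 0\<close> assms(6,7,20,22) n
    by metis
  ultimately show ?thesis
    using feasible unfolding m_def[symmetric]
    by (intro conjI exI[of _ "c1 - lam * c2"]) (auto simp: algebra_simps)
qed

end
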